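(* Let $\mathcal{O}_K$ be a Dedekind domain and let $\mathfrak{n}$ be a composite ideal of $\mathcal{O}_K$. Then $\mathfrak{n}$ is a Carmichael ideal of $\mathcal{O}_K$ if and only if all of the following hold: (1) $\mathfrak{n}$ is square-free; (2) $N_K(\mathfrak{n})$ is finite; (3) $N_K(\mathfrak{p})-1$ divides $N_K(\mathfrak{n})-1$ for every prime ideal $\mathfrak{p}$ dividing $\mathfrak{n}$.
   Context: For an ideal $\mathfrak{n}$ of $\mathcal{O}_K$, $N_K(\mathfrak{n})=|\mathcal{O}_K/\mathfrak{n}|$. A composite ideal means a nonzero proper ideal that is not a prime ideal. A finite ring $S$ is a Carmichael ring if $S$ is not a field and $a^{|S|}=a$ for every $a\in S$; an ideal $I$ of a ring $R$ is a Carmichael ideal if $R/I$ is a Carmichael ring. Square-free means that in the prime ideal factorization of $\mathfrak{n}$ every exponent equals $1$. *)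

theory Defs
  imports "HOL-Algebra.Algebra"
begin

text \<open>Integrally closed domain, stated intrinsically: whenever a fraction a/b (b nonzero)
  is a root of a monic polynomial with coefficients in R, i.e.
  a^n + sum_{i<n} c_i a^i b^(n-i) = 0, then b divides a.\<close>
definition integrally_closed :: "('a, 'b) ring_scheme \<Rightarrow> bool" where
  "integrally_closed R \<longleftrightarrow>
     (\<forall>a\<in>carrier R. \<forall>b\<in>carrier R. b \<noteq> \<zero>\<^bsub>R\<^esub> \<longrightarrow>
        (\<exists>n::nat. n > 0 \<and> (\<exists>c::nat \<Rightarrow> 'a. (\<forall>i<n. c i \<in> carrier R) \<and>
            a [^]\<^bsub>R\<^esub> n \<oplus>\<^bsub>R\<^esub>
              finsum R (\<lambda>i. c i \<otimes>\<^bsub>R\<^esub> (a [^]\<^bsub>R\<^esub> i) \<otimes>\<^bsub>R\<^esub> (b [^]\<^bsub>R\<^esub> (n - i))) {..<n}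
            = \<zero>\<^bsub>R\<^esub>))
        \<longrightarrow> (\<exists>x\<in>carrier R. a = b \<otimes>\<^bsub>R\<^esub> x))"

definition dedekind_domain :: "('a, 'b) ring_scheme \<Rightarrow> bool" where
  "dedekind_domain R \<longleftrightarrow> noetherian_domain R \<and> integrally_closed R \<and>
     (\<forall>P. primeideal P R \<and> P \<noteq> {\<zero>\<^bsub>R\<^esub>} \<longrightarrow> maximalideal P R)"

definition composite_ideal :: "'a set \<Rightarrow> ('a, 'b) ring_scheme \<Rightarrow> bool" where
  "composite_ideal I R \<longleftrightarrow> ideal I R \<and> I \<noteq> {\<zero>\<^bsub>R\<^esub>} \<and> I \<noteq> carrier R \<and> \<not> primeideal I R"

text \<open>Absolute norm N(I) = |R/I| (as a natural number; meaningful when finite).\<close>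
definition ideal_norm :: "('a, 'b) ring_scheme \<Rightarrow> 'a set \<Rightarrow> nat" where
  "ideal_norm R I = card (carrier (R Quot I))"

definition finite_norm :: "('a, 'b) ring_scheme \<Rightarrow> 'a set \<Rightarrow> bool" where
  "finite_norm R I \<longleftrightarrow> finite (carrier (R Quot I))"

definition ideal_dvd :: "('a, 'b) ring_scheme \<Rightarrow> 'a set \<Rightarrow> 'a set \<Rightarrow> bool" where
  "ideal_dvd R P N \<longleftrightarrow> (\<exists>J. ideal J R \<and> N = P \<cdot>\<^bsub>R\<^esub> J)"

text \<open>Square-free: the prime factorization of N has all exponents 1, i.e. N is the product
  of a list of pairwise distinct nonzero prime ideals.\<close>
definition squarefree_ideal :: "('a, 'b) ring_scheme \<Rightarrow> 'a set \<Rightarrow> bool" where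
  "squarefree_ideal R N \<longleftrightarrow>
     (\<exists>ps. distinct ps \<and> (\<forall>P\<in>set ps. primeideal P R \<and> P \<noteq> {\<zero>\<^bsub>R\<^esub>}) \<and>
           N = foldr (ideal_prod R) ps (carrier R))"

definition carmichael_ring :: "('a, 'b) ring_scheme \<Rightarrow> bool" where
  "carmichael_ring S \<longleftrightarrow> finite (carrier S) \<and> \<not> field S \<and>
     (\<forall>a\<in>carrier S. a [^]\<^bsub>S\<^esub> card (carrier S) = a)"

definition carmichael_ideal :: "'a set \<Rightarrow> ('a, 'b) ring_scheme \<Rightarrow> bool" where
  "carmichael_ideal I R \<longleftrightarrow> carmichael_ring (R Quot I)"

end

theory Submission
  imports Defs
begin

text \<open>Write \<open>m = |R/N|\<close>. Then \<open>N\<close> is Carmichael iff \<open>a\<^sup>m \<equiv> a\<close> modulo \<open>N\<close> for every \<open>a\<close>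
  (the quotient is not a field, as \<open>N\<close> is not prime). Every prime \<open>P\<close> containing \<open>N \<noteq> 0\<close> is maximal
  with \<open>R/P\<close> a finite field, and by cyclicity of its unit group \<open>a\<^sup>m \<equiv> a\<close> modulo \<open>P\<close> holds for all
  \<open>a\<close> iff \<open>|R/P| - 1\<close> divides \<open>m - 1\<close>. If \<open>a\<^sup>m \<equiv> a\<close> modulo \<open>N\<close>, then \<open>x (1 - x\<^sup>m\<^sup>-\<^sup>1) \<in> N\<close>, so
  every \<open>x \<notin> N\<close> lies outside any maximal ideal containing \<open>N\<close> and \<open>1 - x\<^sup>m\<^sup>-\<^sup>1\<close>,
  and one exists as \<open>x \<notin> N\<close>: hence \<open>N\<close> is the intersection, i.e.
  the product, of the finitely many maximal ideals above it, and is square-free. Conversely a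
  square-free \<open>N\<close> is the intersection of its prime factors, and the divisibility conditions give
  \<open>a\<^sup>m \<equiv> a\<close> modulo each of them.\<close>

lemma (in field) finite_field_pow_eq_self_iff:
  assumes fin: "finite (carrier R)" and m: "m \<ge> 1"
  shows "(\<forall>x\<in>carrier R. x [^] m = x) \<longleftrightarrow> (card (carrier R) - 1) dvd (m - 1)"
proof -
  interpret G: group "Multiplicative_Group.mult_of R" rewrites
      "([^]\<^bsub>Multiplicative_Group.mult_of R\<^esub>) = (([^]) :: _ \<Rightarrow> nat \<Rightarrow> _)"
      and "\<one>\<^bsub>Multiplicative_Group.mult_of R\<^esub> = \<one>"
    by (rule field_mult_group) (simp_all add: fun_eq_iff nat_pow_def)
  have finG: "finite (carrier (Multiplicative_Group.mult_of R))"
    using fin by simp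
  have order: "order (Multiplicative_Group.mult_of R) = card (carrier R) - 1"
    using order_mult_of[OF fin] by (simp add: order_def)
  obtain g where g: "g \<in> carrier (Multiplicative_Group.mult_of R)"
    and gen: "carrier (Multiplicative_Group.mult_of R) = {g [^] i | i :: nat. i \<in> UNIV}"
    using finite_field_mult_group_has_gen[OF fin] by blast
  have ord_g: "G.ord g = card (carrier R) - 1"
    using G.generate_pow_card[OF g] G.generate_pow_on_finite_carrier[OF finG g] gen order
    by (simp add: order_def)
  have "x [^] m = x \<longleftrightarrow> x [^] (m - 1) = \<one>" if "x \<in> carrier (Multiplicative_Group.mult_of R)" for x
  proof -
    have "x [^] m = x [^] (m - 1) \<otimes> x"
      using m by (metis Suc_diff_le diff_Suc_1 nat_pow_Suc)
    then show ?thesis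
      using that m_rcancel[of x "x [^] (m - 1)" \<one>] by auto
  qed
  moreover have "\<zero> [^] m = \<zero>"
    using m by (simp add: nat_pow_zero)
  ultimately have "(\<forall>x\<in>carrier R. x [^] m = x) \<longleftrightarrow>
      (\<forall>x\<in>carrier (Multiplicative_Group.mult_of R). G.ord x dvd m - 1)"
    using G.pow_eq_id by auto
  also have "\<dots> \<longleftrightarrow> G.ord g dvd m - 1"
    using g G.ord_dvd_group_order order ord_g dvd_trans by metis
  finally show ?thesis
    using ord_g by simp
qed

context ring begin

lemma FactRing_carrier: "carrier (R Quot I) = (+>) I ` carrier R"
  by (auto simp: FactRing_def A_RCOSETS_def')

lemma FactRing_pow_eq_self_iff:
  assumes "ideal I R"
  shows "(\<forall>x\<in>carrier (R Quot I). x [^]\<^bsub>R Quot I\<^esub> (m::nat) = x) \<longleftrightarrow>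
         (\<forall>a\<in>carrier R. a [^] m \<ominus> a \<in> I)"
proof -
  interpret h: ring_hom_ring R "R Quot I" "(+>) I"
    by (rule ideal.rcos_ring_hom_ring[OF assms])
  have "(I +> a) [^]\<^bsub>R Quot I\<^esub> m = I +> a \<longleftrightarrow> a [^] m \<ominus> a \<in> I" if "a \<in> carrier R" for a
    using h.hom_nat_pow[OF that] quotient_eq_iff_same_a_r_cos[OF assms] that by simp
  then show ?thesis
    by (auto simp: FactRing_carrier)
qed

lemma two_le_card_FactRing:
  assumes "ideal I R" "I \<noteq> carrier R" "finite (carrier (R Quot I))"
  shows "2 \<le> card (carrier (R Quot I))"
proof -
  have "\<one> \<notin> I"
    using ideal.one_imp_carrier[OF assms(1)] assms(2) by blast
  then have "I +> \<one> \<noteq> I +> \<zero>"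
    using quotient_eq_iff_same_a_r_cos[OF assms(1), of \<one> \<zero>] by (simp add: a_minus_def)
  moreover have "card {I +> \<one>, I +> \<zero>} \<le> card (carrier (R Quot I))"
    by (rule card_mono[OF assms(3)]) (simp add: FactRing_carrier)
  ultimately show ?thesis
    by simp
qed

lemma ideal_Un_subset_set_add:
  assumes "ideal I R" "ideal J R"
  shows "I \<union> J \<subseteq> I <+> J"
  using union_genideal[OF assms] genideal_self ideal.Icarr[OF assms(1)] ideal.Icarr[OF assms(2)]
  by (metis Un_subset_iff subsetI)

lemma set_add_ideal_absorb:
  assumes "ideal I R" "ideal J R" "I \<subseteq> J"
  shows "J <+> I = J"
proof -
  have "J <+> I = Idl J"
    using union_genideal[OF assms(2,1)] assms(3) by (simp add: Un_absorb2)
  also have "\<dots> = J"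
    using genideal_minimal[OF assms(2)] genideal_self ideal.Icarr[OF assms(2)] by blast
  finally show ?thesis .
qed

lemma finite_FactRing_mono:
  assumes "ideal I R" "ideal J R" "I \<subseteq> J" and fin: "finite (carrier (R Quot I))"
  shows "finite (carrier (R Quot J))"
proof -
  have subs: "I \<subseteq> carrier R" "J \<subseteq> carrier R"
    using assms(1,2) by (simp_all add: additive_subgroup.a_subset ideal.axioms(1))
  have "J +> a = J <+> (I +> a)" if "a \<in> carrier R" for a
    using a_setmult_rcos_assoc[OF subs(2,1) that] set_add_ideal_absorb[OF assms(1-3)] by auto
  then have "carrier (R Quot J) = (set_add R J) ` carrier (R Quot I)"
    by (auto simp: FactRing_carrier image_image)
  then show ?thesis
    using fin by simp
qed

lemma finite_ideals_containing:
  assumes "ideal N R" "finite (carrier (R Quot N))"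
  shows "finite {J. ideal J R \<and> N \<subseteq> J}"
proof -
  have "{J. ideal J (R Quot N)} \<subseteq> Pow (carrier (R Quot N))"
    by (auto dest: ideal.axioms(1) additive_subgroup.a_subset)
  then have "finite {J. ideal J (R Quot N)}"
    using assms(2) finite_subset by blast
  then show ?thesis
    using bij_betw_finite[OF quot_ideal_correspondence[OF assms(1)]] by blast
qed

lemma maximalideal_add_eq_carrier:
  assumes P: "maximalideal P R" and J: "ideal J R" "\<not> J \<subseteq> P"
  shows "P <+> J = carrier R"
proof -
  have iP: "ideal P R"
    using P by (rule maximalideal.axioms(1))
  have iPJ: "ideal (P <+> J) R"
    using add_ideals[OF iP J(1)] .
  have "P \<subseteq> P <+> J" "J \<subseteq> P <+> J"
    using ideal_Un_subset_set_add[OF iP J(1)] by auto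
  moreover have "P <+> J \<subseteq> carrier R"
    using iPJ by (simp add: additive_subgroup.a_subset ideal.axioms(1))
  ultimately show ?thesis
    using maximalideal.I_maximal[OF P iPJ] J(2) by blast
qed

lemma exists_maximalideal_above:
  assumes N: "ideal N R" "finite (carrier (R Quot N))"
    and I: "ideal I R" "N \<subseteq> I" "I \<noteq> carrier R"
  obtains M where "maximalideal M R" "I \<subseteq> M"
proof -
  define A where "A = {J. ideal J R \<and> I \<subseteq> J \<and> J \<noteq> carrier R}"
  have "A \<subseteq> {J. ideal J R \<and> N \<subseteq> J}"
    using I(2) unfolding A_def by auto
  then have "finite A"
    using finite_ideals_containing[OF N] finite_subset by blast
  moreover have "I \<in> A"
    using I unfolding A_def by auto
  ultimately obtain M where M: "M \<in> A" and M_max: "\<forall>J\<in>A. M \<subseteq> J \<longrightarrow> M = J"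
    using finite_has_maximal by blast
  have "maximalideal M R"
  proof (rule maximalidealI)
    show "ideal M R" "carrier R \<noteq> M"
      using M unfolding A_def by auto
    show "J = M \<or> J = carrier R" if "ideal J R" "M \<subseteq> J" "J \<subseteq> carrier R" for J
    proof (cases "J = carrier R")
      case False
      then have "J \<in> A"
        using that M unfolding A_def by blast
      then show ?thesis
        using M_max that(2) by blast
    qed simp
  qed
  then show ?thesis
    using that M unfolding A_def by blast
qed

lemma ideal_foldr_ideal_prod:
  "\<forall>P\<in>set ps. ideal P R \<Longrightarrow> ideal (foldr (ideal_prod R) ps (carrier R)) R"
  by (induction ps) (auto intro: oneideal ideal_prod_is_ideal)

lemma primeideal_foldr_ideal_prod_subsetD:
  assumes P: "primeideal P R" and ps: "\<forall>Q\<in>set ps. ideal Q R"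
    and sub: "foldr (ideal_prod R) ps (carrier R) \<subseteq> P"
  shows "\<exists>Q\<in>set ps. Q \<subseteq> P"
  using ps sub
proof (induction ps)
  case Nil
  then show ?case
    using primeideal.I_notcarr[OF P]
      additive_subgroup.a_subset[OF ideal.axioms(1)[OF primeideal.axioms(1)[OF P]]]
    by auto
next
  case (Cons Q ps)
  then show ?case
    using primeideal_divides_ideal_prod[OF P] ideal_foldr_ideal_prod[of ps] by auto
qed

end

context cring begin

lemma pow_minus_self_mem_maximalideal_iff:
  assumes "maximalideal P R" "finite (carrier (R Quot P))" "m \<ge> 1"
  shows "(\<forall>a\<in>carrier R. a [^] m \<ominus> a \<in> P) \<longleftrightarrow> (card (carrier (R Quot P)) - 1) dvd (m - 1)"
  using field.finite_field_pow_eq_self_iff[OF maximalideal.quotient_is_field[OF assms(1) is_cring]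
      assms(2,3)]
    FactRing_pow_eq_self_iff[OF maximalideal.axioms(1)[OF assms(1)]]
  by simp

lemma exists_maximalideal_not_mem:
  assumes N: "ideal N R" "finite (carrier (R Quot N))" and m: "m \<ge> (2::nat)"
    and fermat: "\<forall>a\<in>carrier R. a [^] m \<ominus> a \<in> N"
    and x: "x \<in> carrier R" "x \<notin> N"
  obtains M where "maximalideal M R" "N \<subseteq> M" "x \<notin> M"
proof -
  define e where "e = x [^] (m - 1)"
  have e: "e \<in> carrier R" "\<one> \<ominus> e \<in> carrier R"
    using x by (simp_all add: e_def)
  define k where "k = m - 2"
  have m_k: "m = Suc (Suc k)"
    using m unfolding k_def by simp
  have x_pow: "x [^] m = x \<otimes> e"
    using x nat_pow_Suc2[of x "Suc k"] unfolding e_def m_k by simp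
  have x_e: "x \<otimes> (\<one> \<ominus> e) \<in> N"
  proof -
    have "x \<otimes> (\<one> \<ominus> e) = \<ominus> (x [^] m \<ominus> x)"
      using x e x_pow by algebra
    then show ?thesis
      using fermat x N(1) by (simp add: additive_subgroup.a_inv_closed ideal.axioms(1))
  qed
  define I where "I = N <+>\<^bsub>R\<^esub> PIdl (\<one> \<ominus> e)"
  have iI: "ideal I R"
    unfolding I_def using add_ideals[OF N(1) cgenideal_ideal[OF e(2)]] .
  have N_I: "N \<subseteq> I" and e_I: "\<one> \<ominus> e \<in> I"
    using ideal_Un_subset_set_add[OF N(1) cgenideal_ideal[OF e(2)]] cgenideal_self[OF e(2)]
    unfolding I_def by auto
  have "I \<noteq> carrier R"
  proof
    assume "I = carrier R"
    then obtain n y where n: "n \<in> N" and y: "y \<in> PIdl (\<one> \<ominus> e)" and one: "\<one> = n \<oplus> y"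
      unfolding I_def set_add_def' by blast
    obtain r where r: "r \<in> carrier R" and y_r: "y = r \<otimes> (\<one> \<ominus> e)"
      using y unfolding cgenideal_def by blast
    have sum_one: "n \<oplus> r \<otimes> (\<one> \<ominus> e) = \<one>"
      using one unfolding y_r by (rule sym)
    have "x = (n \<oplus> r \<otimes> (\<one> \<ominus> e)) \<otimes> x"
      using x sum_one by simp
    also have "\<dots> = n \<otimes> x \<oplus> r \<otimes> (x \<otimes> (\<one> \<ominus> e))"
      using ideal.Icarr[OF N(1) n] x r e by algebra
    finally have x_eq: "x = n \<otimes> x \<oplus> r \<otimes> (x \<otimes> (\<one> \<ominus> e))" .
    have "n \<otimes> x \<in> N" "r \<otimes> (x \<otimes> (\<one> \<ominus> e)) \<in> N"
      using n x r x_e N(1) by (simp_all add: ideal.I_r_closed ideal.I_l_closed)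
    then have "x \<in> N"
      using x_eq additive_subgroup.a_closed[OF ideal.axioms(1)[OF N(1)]] by metis
    then show False
      using x(2) by blast
  qed
  then obtain M where M: "maximalideal M R" "I \<subseteq> M"
    using exists_maximalideal_above[OF N iI N_I] by blast
  have iM: "ideal M R"
    using M(1) by (rule maximalideal.axioms(1))
  have "x \<notin> M"
  proof
    assume "x \<in> M"
    then have "e \<in> M"
      using x nat_pow_Suc2[of x k] ideal.I_r_closed[OF iM] unfolding e_def m_k by simp
    moreover have "\<one> \<ominus> e \<in> M"
      using e_I M(2) by blast
    moreover have "(\<one> \<ominus> e) \<oplus> e = \<one>"
      using e by algebra
    ultimately have "\<one> \<in> M"
      using additive_subgroup.a_closed[OF ideal.axioms(1)[OF iM]] by metis
    then show False
      using ideal.one_imp_carrier[OF iM] maximalideal.I_notcarr[OF M(1)] by simp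
  qed
  then show ?thesis
    using that M N_I by blast
qed

lemma ideal_prod_foldr_maximalideals_eq_inter:
  assumes P: "maximalideal P R" and ps: "\<forall>Q\<in>set ps. maximalideal Q R" "P \<notin> set ps"
  shows "P \<cdot> foldr (ideal_prod R) ps (carrier R) = P \<inter> foldr (ideal_prod R) ps (carrier R)"
proof -
  let ?J = "foldr (ideal_prod R) ps (carrier R)"
  have ideals: "\<forall>Q\<in>set ps. ideal Q R"
    using ps(1) by (auto dest: maximalideal.axioms(1))
  have iP: "ideal P R"
    using P by (rule maximalideal.axioms(1))
  have iJ: "ideal ?J R"
    using ideal_foldr_ideal_prod[OF ideals] .
  have "\<not> ?J \<subseteq> P"
  proof
    assume "?J \<subseteq> P"
    then obtain Q where Q: "Q \<in> set ps" "Q \<subseteq> P"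
      using primeideal_foldr_ideal_prod_subsetD[OF maximalideal_prime[OF P] ideals] by blast
    moreover have "maximalideal Q R"
      using Q(1) ps(1) by blast
    ultimately have "P = Q \<or> P = carrier R"
      using maximalideal.I_maximal[OF _ iP] additive_subgroup.a_subset[OF ideal.axioms(1)[OF iP]]
      by blast
    then show False
      using Q(1) ps(2) maximalideal.I_notcarr[OF P] by auto
  qed
  then show ?thesis
    using ideal_prod_eq_inter[OF iP iJ maximalideal_add_eq_carrier[OF P iJ]] by simp
qed

lemma foldr_distinct_maximalideals_eq_Inter:
  assumes "distinct ps" "\<forall>Q\<in>set ps. maximalideal Q R"
  shows "foldr (ideal_prod R) ps (carrier R) = carrier R \<inter> \<Inter>(set ps)"
  using assms
proof (induction ps)
  case (Cons P ps)
  then have "foldr (ideal_prod R) (P # ps) (carrier R) = P \<inter> (carrier R \<inter> \<Inter>(set ps))"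
    using ideal_prod_foldr_maximalideals_eq_inter[of P ps] by simp
  then show ?case
    by auto
qed simp

lemma ideal_dvd_foldr_distinct_maximalideals:
  assumes ps: "distinct ps" "\<forall>Q\<in>set ps. maximalideal Q R" and P: "P \<in> set ps"
  shows "ideal_dvd R P (foldr (ideal_prod R) ps (carrier R))"
proof -
  let ?qs = "remove1 P ps"
  have qs: "distinct ?qs" "\<forall>Q\<in>set ?qs. maximalideal Q R" "set ?qs = set ps - {P}"
    using ps by (auto simp: set_remove1_eq)
  have "P \<cdot> foldr (ideal_prod R) ?qs (carrier R) = P \<inter> (carrier R \<inter> \<Inter>(set ?qs))"
    using ideal_prod_foldr_maximalideals_eq_inter[of P ?qs] foldr_distinct_maximalideals_eq_Inter[OF qs(1,2)]
      ps P qs(3) by simp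
  also have "\<dots> = foldr (ideal_prod R) ps (carrier R)"
    using foldr_distinct_maximalideals_eq_Inter[OF ps] P qs(3) by auto
  finally have "P \<cdot> foldr (ideal_prod R) ?qs (carrier R) = foldr (ideal_prod R) ps (carrier R)" .
  moreover have "ideal (foldr (ideal_prod R) ?qs (carrier R)) R"
    using qs(2) by (auto dest: maximalideal.axioms(1) intro: ideal_foldr_ideal_prod)
  ultimately show ?thesis
    unfolding ideal_dvd_def by blast
qed


lemma carmichael_ideal_iff_pow_minus_self_mem:
  assumes "ideal N R" "\<not> primeideal N R"
  shows "carmichael_ideal N R \<longleftrightarrow>
           finite (carrier (R Quot N)) \<and> (\<forall>a\<in>carrier R. a [^] ideal_norm R N \<ominus> a \<in> N)"
proof -
  have "\<not> field (R Quot N)"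
  proof
    assume "field (R Quot N)"
    then have "domain (R Quot N)"
      by (rule field.axioms(1))
    then show False
      using quot_domain_imp_primeideal[OF assms(1)] assms(2) by simp
  qed
  then show ?thesis
    unfolding carmichael_ideal_def carmichael_ring_def ideal_norm_def
    using FactRing_pow_eq_self_iff[OF assms(1)] by simp
qed

lemma squarefree_ideal_if_pow_minus_self_mem:
  assumes N: "ideal N R" "N \<noteq> {\<zero>}" "finite (carrier (R Quot N))" and m: "m \<ge> (2::nat)"
    and fermat: "\<forall>a\<in>carrier R. a [^] m \<ominus> a \<in> N"
  shows "squarefree_ideal R N"
proof -
  define S where "S = {M. maximalideal M R \<and> N \<subseteq> M}"
  have "S \<subseteq> {J. ideal J R \<and> N \<subseteq> J}"
    unfolding S_def by (auto dest: maximalideal.axioms(1))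
  then have "finite S"
    using finite_ideals_containing[OF N(1,3)] finite_subset by blast
  then obtain ps where ps: "set ps = S" "distinct ps"
    using finite_distinct_list by blast
  have ps_max: "\<forall>P\<in>set ps. maximalideal P R \<and> N \<subseteq> P"
    using ps(1) unfolding S_def by blast
  have "N = carrier R \<inter> \<Inter>S"
  proof
    show "N \<subseteq> carrier R \<inter> \<Inter>S"
      using additive_subgroup.a_subset[OF ideal.axioms(1)[OF N(1)]] unfolding S_def by blast
    show "carrier R \<inter> \<Inter>S \<subseteq> N"
    proof
      fix x assume x: "x \<in> carrier R \<inter> \<Inter>S"
      show "x \<in> N"
      proof (rule ccontr)
        assume "x \<notin> N"
        then obtain M where "maximalideal M R" "N \<subseteq> M" "x \<notin> M"
          using exists_maximalideal_not_mem[OF N(1,3) m fermat] x by blast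
        then show False
          using x unfolding S_def by blast
      qed
    qed
  qed
  then have "N = foldr (ideal_prod R) ps (carrier R)"
    using foldr_distinct_maximalideals_eq_Inter[OF ps(2)] ps_max ps(1) by simp
  moreover have "primeideal P R \<and> P \<noteq> {\<zero>}" if "P \<in> set ps" for P
    using ps_max that maximalideal_prime N(2) additive_subgroup.zero_closed[OF ideal.axioms(1)[OF N(1)]]
    by blast
  ultimately show ?thesis
    unfolding squarefree_ideal_def using ps(2) by blast
qed

context
  assumes dim_le_1: "\<And>P. primeideal P R \<Longrightarrow> P \<noteq> {\<zero>} \<Longrightarrow> maximalideal P R"
begin

lemma ideal_norm_dvd_if_pow_minus_self_mem:
  assumes N: "ideal N R" "N \<noteq> {\<zero>}" "finite (carrier (R Quot N))" "ideal_norm R N \<ge> 1"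
    and fermat: "\<forall>a\<in>carrier R. a [^] ideal_norm R N \<ominus> a \<in> N"
    and P: "primeideal P R" "ideal_dvd R P N"
  shows "(ideal_norm R P - 1) dvd (ideal_norm R N - 1)"
proof -
  obtain J where "ideal J R" "N = P \<cdot> J"
    using P(2) unfolding ideal_dvd_def by blast
  then have N_P: "N \<subseteq> P"
    using ideal_prod_inter[OF primeideal.axioms(1)[OF P(1)]] by blast
  then have "P \<noteq> {\<zero>}"
    using N(2) additive_subgroup.zero_closed[OF ideal.axioms(1)[OF N(1)]] by blast
  then have max: "maximalideal P R"
    using dim_le_1 P(1) by blast
  have "finite (carrier (R Quot P))"
    using finite_FactRing_mono[OF N(1) primeideal.axioms(1)[OF P(1)] N_P N(3)] .
  then show ?thesis
    using pow_minus_self_mem_maximalideal_iff[OF max _ N(4)] fermat N_P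
    unfolding ideal_norm_def by blast
qed

lemma pow_minus_self_mem_if_ideal_norm_dvd:
  assumes N: "squarefree_ideal R N" "finite (carrier (R Quot N))" "ideal_norm R N \<ge> 1"
    and korselt: "\<forall>P. primeideal P R \<and> ideal_dvd R P N \<longrightarrow>
                    (ideal_norm R P - 1) dvd (ideal_norm R N - 1)"
  shows "\<forall>a\<in>carrier R. a [^] ideal_norm R N \<ominus> a \<in> N"
proof -
  obtain ps where ps: "distinct ps" "\<forall>P\<in>set ps. primeideal P R \<and> P \<noteq> {\<zero>}"
    and N_ps: "N = foldr (ideal_prod R) ps (carrier R)"
    using N(1) unfolding squarefree_ideal_def by blast
  have ps_max: "\<forall>P\<in>set ps. maximalideal P R"
    using ps(2) dim_le_1 by blast
  have iN: "ideal N R"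
    unfolding N_ps using ps_max by (auto dest: maximalideal.axioms(1) intro: ideal_foldr_ideal_prod)
  have "\<forall>a\<in>carrier R. a [^] ideal_norm R N \<ominus> a \<in> P" if P: "P \<in> set ps" for P
  proof -
    have "N \<subseteq> P"
      using foldr_distinct_maximalideals_eq_Inter[OF ps(1) ps_max] N_ps P by blast
    then have "finite (carrier (R Quot P))"
      using finite_FactRing_mono[OF iN _ _ N(2)] P ps_max by (auto dest: maximalideal.axioms(1))
    moreover have "(ideal_norm R P - 1) dvd (ideal_norm R N - 1)"
      using korselt ps(2) P ideal_dvd_foldr_distinct_maximalideals[OF ps(1) ps_max P] N_ps by blast
    ultimately show ?thesis
      using pow_minus_self_mem_maximalideal_iff[OF _ _ N(3)] P ps_max
      unfolding ideal_norm_def by blast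
  qed
  then show ?thesis
    using foldr_distinct_maximalideals_eq_Inter[OF ps(1) ps_max] N_ps by auto
qed

lemma carmichael_ideal_iff_korselt:
  assumes "composite_ideal N R"
  shows "carmichael_ideal N R \<longleftrightarrow>
           squarefree_ideal R N \<and> finite_norm R N \<and>
           (\<forall>P. primeideal P R \<and> ideal_dvd R P N \<longrightarrow>
                (ideal_norm R P - 1) dvd (ideal_norm R N - 1))"
proof -
  have N: "ideal N R" "N \<noteq> {\<zero>}" "N \<noteq> carrier R" "\<not> primeideal N R"
    using assms unfolding composite_ideal_def by auto
  have norm: "ideal_norm R N \<ge> 2" if "finite (carrier (R Quot N))"
    using two_le_card_FactRing[OF N(1,3) that] unfolding ideal_norm_def .
  show ?thesis
    unfolding carmichael_ideal_iff_pow_minus_self_mem[OF N(1,4)] finite_norm_def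
  proof
    assume "finite (carrier (R Quot N)) \<and> (\<forall>a\<in>carrier R. a [^] ideal_norm R N \<ominus> a \<in> N)"
    then show "squarefree_ideal R N \<and> finite (carrier (R Quot N)) \<and>
        (\<forall>P. primeideal P R \<and> ideal_dvd R P N \<longrightarrow> (ideal_norm R P - 1) dvd (ideal_norm R N - 1))"
      using squarefree_ideal_if_pow_minus_self_mem[OF N(1,2) _ norm]
        ideal_norm_dvd_if_pow_minus_self_mem[OF N(1,2)] norm by fastforce
  next
    assume "squarefree_ideal R N \<and> finite (carrier (R Quot N)) \<and>
        (\<forall>P. primeideal P R \<and> ideal_dvd R P N \<longrightarrow> (ideal_norm R P - 1) dvd (ideal_norm R N - 1))"
    then show "finite (carrier (R Quot N)) \<and> (\<forall>a\<in>carrier R. a [^] ideal_norm R N \<ominus> a \<in> N)"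
      using pow_minus_self_mem_if_ideal_norm_dvd norm by fastforce
  qed
qed

end

end

theorem theorem3p1:
  fixes R :: "('a, 'b) ring_scheme" and N :: "'a set"
  assumes "dedekind_domain R"
    and "composite_ideal N R"
  shows "carmichael_ideal N R \<longleftrightarrow>
           squarefree_ideal R N \<and> finite_norm R N \<and>
           (\<forall>P. primeideal P R \<and> ideal_dvd R P N \<longrightarrow>
                (ideal_norm R P - 1) dvd (ideal_norm R N - 1))"
proof -
  interpret domain R
    using assms(1) unfolding dedekind_domain_def noetherian_domain_def by blast
  show ?thesis
    by (rule carmichael_ideal_iff_korselt)
      (use assms in \<open>auto simp: dedekind_domain_def\<close>)
qed

end
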